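(* Let $n\ge 2$ and let $T_n$ be the triangular grid graph. Then the boundary cycle of $T_n$ (the cycle formed by the lattice points on the three sides of the big triangle) is a $\lfloor (n-1)/2\rfloor$-supported cycle in $T_n$.
   Context: $T_n$ is the graph whose vertices are the points of the planar triangular lattice (generated by unit vectors at angle $\pi/3$) lying in a closed equilateral triangle of side length $n-1$ whose corners are lattice points (so each side contains $n$ vertices), two vertices being adjacent iff their Euclidean distance is $1$. A cycle $C$ in a graph $G$ is $k$-supported if it can be partitioned into three edge-disjoint paths $I_1,I_2,I_3$, with $I_1\cap I_2$, $I_2\cap I_3$, $I_3\cap I_1$ each a single vertex, such that for all vertices $u_i\in V(I_i)$ ($i=1,2,3$), $\max_{i,j} d_G(u_i,u_j)\ge k$, where $d_G$ is the graph distance. *)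

theory Defs
  imports Complex_Main
begin

definition walk :: "'a set \<Rightarrow> ('a \<Rightarrow> 'a \<Rightarrow> bool) \<Rightarrow> 'a list \<Rightarrow> bool" where
  "walk V E xs \<longleftrightarrow> xs \<noteq> [] \<and> set xs \<subseteq> V \<and>
     (\<forall>i. Suc i < length xs \<longrightarrow> E (xs ! i) (xs ! Suc i))"

definition gdist :: "'a set \<Rightarrow> ('a \<Rightarrow> 'a \<Rightarrow> bool) \<Rightarrow> 'a \<Rightarrow> 'a \<Rightarrow> nat" where
  "gdist V E u v = (LEAST m. \<exists>xs. walk V E xs \<and> hd xs = u \<and> last xs = v \<and> length xs = Suc m)"

definition is_path :: "'a set \<Rightarrow> ('a \<Rightarrow> 'a \<Rightarrow> bool) \<Rightarrow> 'a list \<Rightarrow> bool" where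
  "is_path V E xs \<longleftrightarrow> walk V E xs \<and> distinct xs"

definition path_edges :: "'a list \<Rightarrow> 'a set set" where
  "path_edges xs = {{xs ! i, xs ! Suc i} | i. Suc i < length xs}"

definition is_cycle :: "'a set \<Rightarrow> ('a \<Rightarrow> 'a \<Rightarrow> bool) \<Rightarrow> 'a list \<Rightarrow> bool" where
  "is_cycle V E xs \<longleftrightarrow> 3 \<le> length xs \<and> distinct xs \<and> set xs \<subseteq> V \<and>
     (\<forall>i < length xs. E (xs ! i) (xs ! ((i + 1) mod length xs)))"

definition cycle_edges :: "'a list \<Rightarrow> 'a set set" where
  "cycle_edges xs = {{xs ! i, xs ! ((i + 1) mod length xs)} | i. i < length xs}"

definition k_supported :: "'a set \<Rightarrow> ('a \<Rightarrow> 'a \<Rightarrow> bool) \<Rightarrow> 'a list \<Rightarrow> nat \<Rightarrow> bool" where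
  "k_supported V E C k \<longleftrightarrow> is_cycle V E C \<and>
     (\<exists>I1 I2 I3.
        is_path V E I1 \<and> is_path V E I2 \<and> is_path V E I3 \<and>
        2 \<le> length I1 \<and> 2 \<le> length I2 \<and> 2 \<le> length I3 \<and>
        path_edges I1 \<union> path_edges I2 \<union> path_edges I3 = cycle_edges C \<and>
        path_edges I1 \<inter> path_edges I2 = {} \<and>
        path_edges I2 \<inter> path_edges I3 = {} \<and>
        path_edges I3 \<inter> path_edges I1 = {} \<and>
        (\<exists>v. set I1 \<inter> set I2 = {v}) \<and>
        (\<exists>v. set I2 \<inter> set I3 = {v}) \<and>
        (\<exists>v. set I3 \<inter> set I1 = {v}) \<and>
        (\<forall>u1\<in>set I1. \<forall>u2\<in>set I2. \<forall>u3\<in>set I3.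
           k \<le> max (max (gdist V E u1 u2) (gdist V E u2 u3)) (gdist V E u3 u1)))"

definition lat_pt :: "int \<times> int \<Rightarrow> complex" where
  "lat_pt p = of_int (fst p) + of_int (snd p) * cis (pi / 3)"

text \<open>Lattice points in the closed triangle with corners 0, (n-1), (n-1) cis(pi/3).\<close>
definition tri_V :: "nat \<Rightarrow> (int \<times> int) set" where
  "tri_V n = {(a, b). 0 \<le> a \<and> 0 \<le> b \<and> a + b \<le> int n - 1}"

definition tri_E :: "nat \<Rightarrow> int \<times> int \<Rightarrow> int \<times> int \<Rightarrow> bool" where
  "tri_E n u v \<longleftrightarrow> u \<in> tri_V n \<and> v \<in> tri_V n \<and> dist (lat_pt u) (lat_pt v) = 1"

text \<open>Boundary cycle: the 3(n-1) lattice points on the sides, in cyclic order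
  (0,0),...,(n-2,0),(n-1,0),(n-2,1),...,(1,n-2),(0,n-1),(0,n-2),...,(0,1).\<close>
definition bnd_pt :: "nat \<Rightarrow> nat \<Rightarrow> int \<times> int" where
  "bnd_pt n i =
     (let m = int n - 1; j = int i in
      if j < m then (j, 0)
      else if j < 2 * m then (m - (j - m), j - m)
      else (0, m - (j - 2 * m)))"

definition boundary_cycle :: "nat \<Rightarrow> (int \<times> int) list" where
  "boundary_cycle n = map (bnd_pt n) [0..<3 * (n - 1)]"

end

theory Submission
  imports Defs
begin

(* Take the three sides of the big triangle as the paths I1, I2, I3. In lattice coordinates (a, b)
   an edge of T_n changes a, and also a + b, by at most 1, so the graph distance dominates the
   differences of both. For u1 = (i, 0) on the base, every u2 on the side a + b = n - 1 is at
   distance at least n - 1 - i, and every u3 on the side a = 0 is at distance at least i; one of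
   the two bounds is at least (n - 1) / 2. *)

lemma walk_Cons_Cons:
  "walk V E (x # y # xs) \<longleftrightarrow> x \<in> V \<and> E x y \<and> walk V E (y # xs)"
  unfolding walk_def by (auto simp: All_less_Suc2 less_Suc_eq_0_disj)

lemma walk_rev:
  assumes "walk V E xs" and "\<And>x y. E x y \<Longrightarrow> E y x"
  shows "walk V E (rev xs)"
  unfolding walk_def
proof (intro conjI allI impI)
  show "rev xs \<noteq> []" "set (rev xs) \<subseteq> V"
    using assms(1) by (auto simp: walk_def)
  fix i assume i: "Suc i < length (rev xs)"
  let ?j = "length xs - Suc (Suc i)"
  have "E (xs ! ?j) (xs ! Suc ?j)"
    using assms(1) i by (auto simp: walk_def)
  moreover have "rev xs ! i = xs ! Suc ?j" "rev xs ! Suc i = xs ! ?j"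
    using i by (auto simp: rev_nth Suc_diff_Suc)
  ultimately show "E (rev xs ! i) (rev xs ! Suc i)"
    using assms(2) by simp
qed

lemma walk_lipschitz_bound:
  fixes f :: "'a \<Rightarrow> int"
  assumes "walk V E xs" and "\<And>x y. E x y \<Longrightarrow> \<bar>f x - f y\<bar> \<le> 1"
  shows "\<bar>f (hd xs) - f (last xs)\<bar> \<le> int (length xs) - 1"
  using assms(1)
proof (induction xs rule: induct_list012)
  case (3 x y xs)
  then have "\<bar>f x - f y\<bar> \<le> 1" and "\<bar>f y - f (last (y # xs))\<bar> \<le> int (length (y # xs)) - 1"
    by (auto simp: walk_Cons_Cons assms(2))
  then show ?case
    by simp
qed (simp_all add: walk_def)

lemma lipschitz_le_gdist:
  fixes f :: "'a \<Rightarrow> int"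
  assumes "walk V E xs" "hd xs = u" "last xs = v" and "\<And>x y. E x y \<Longrightarrow> \<bar>f x - f y\<bar> \<le> 1"
  shows "\<bar>f u - f v\<bar> \<le> int (gdist V E u v)"
proof -
  have "\<exists>ys. walk V E ys \<and> hd ys = u \<and> last ys = v \<and> length ys = Suc (length xs - 1)"
    using assms(1-3) by (auto simp: walk_def)
  then have "\<exists>ys. walk V E ys \<and> hd ys = u \<and> last ys = v \<and> length ys = Suc (gdist V E u v)"
    unfolding gdist_def by (rule LeastI)  \<comment> \<open>the given walk makes the LEAST non-junk\<close>
  then obtain ys where "walk V E ys" "hd ys = u" "last ys = v" "length ys = Suc (gdist V E u v)"
    by blast
  with walk_lipschitz_bound[OF this(1) assms(4)] show ?thesis
    by simp
qed

lemma dist_lat_pt: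
  "dist (lat_pt u) (lat_pt v) =
   sqrt (of_int ((fst u - fst v)\<^sup>2 + (fst u - fst v) * (snd u - snd v) + (snd u - snd v)\<^sup>2))"
proof -
  define p q where "p = fst u - fst v" and "q = snd u - snd v"
  have "cis (pi / 3) = Complex (1 / 2) (sqrt 3 / 2)"
    by (simp add: cis.ctr cos_60 sin_60)
  then have "lat_pt u - lat_pt v = Complex (of_int p + of_int q / 2) (of_int q * sqrt 3 / 2)"
    unfolding lat_pt_def p_def q_def by (simp add: complex_eq_iff field_simps)
  then have "dist (lat_pt u) (lat_pt v) = sqrt ((of_int p + of_int q / 2)\<^sup>2 + (of_int q * sqrt 3 / 2)\<^sup>2)"
    by (simp add: dist_norm cmod_def)
  also have "(of_int p + of_int q / 2)\<^sup>2 + (of_int q * sqrt 3 / 2)\<^sup>2 = of_int (p\<^sup>2 + p * q + q\<^sup>2)"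
    by (simp add: power2_eq_square field_simps)
  finally show ?thesis by (simp add: p_def q_def)
qed

lemma abs_le_power2_int: "\<bar>x\<bar> \<le> x\<^sup>2" for x :: int
proof (cases "x = 0")
  case False
  then have "\<bar>x\<bar> * 1 \<le> \<bar>x\<bar> * \<bar>x\<bar>"
    by (intro mult_left_mono) auto
  then show ?thesis
    by (simp add: power2_eq_square abs_mult_self_eq)
qed simp

lemma eisenstein_norm_eq_1_iff:
  fixes p q :: int
  shows "p\<^sup>2 + p * q + q\<^sup>2 = 1 \<longleftrightarrow> (p, q) \<in> {(1, 0), (-1, 0), (0, 1), (0, -1), (1, -1), (-1, 1)}"
proof
  assume norm: "p\<^sup>2 + p * q + q\<^sup>2 = 1"
  have "p\<^sup>2 + q\<^sup>2 + (p + q)\<^sup>2 = 2"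
    using norm by (simp add: power2_eq_square algebra_simps)
  then have "\<bar>p\<bar> + \<bar>q\<bar> + \<bar>p + q\<bar> \<le> 2"
    using abs_le_power2_int[of p] abs_le_power2_int[of q] abs_le_power2_int[of "p + q"] by linarith
  then have "p \<in> {-1, 0, 1}" "q \<in> {-1, 0, 1}"
    by auto
  then show "(p, q) \<in> {(1, 0), (-1, 0), (0, 1), (0, -1), (1, -1), (-1, 1)}"
    using norm by auto
qed auto

lemma tri_E_iff:
  "tri_E n u v \<longleftrightarrow> u \<in> tri_V n \<and> v \<in> tri_V n \<and>
     (fst u - fst v, snd u - snd v) \<in> {(1, 0), (-1, 0), (0, 1), (0, -1), (1, -1), (-1, 1)}"
  unfolding tri_E_def dist_lat_pt real_sqrt_eq_1_iff of_int_eq_1_iff eisenstein_norm_eq_1_iff ..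

lemma tri_E_sym: "tri_E n u v \<Longrightarrow> tri_E n v u"
  by (auto simp: tri_E_def dist_commute)

lemma tri_E_fst_lipschitz: "tri_E n u v \<Longrightarrow> \<bar>fst u - fst v\<bar> \<le> 1"
  by (auto simp: tri_E_iff)

lemma tri_E_coord_sum_lipschitz:
  "tri_E n u v \<Longrightarrow> \<bar>(fst u + snd u) - (fst v + snd v)\<bar> \<le> 1"
  by (auto simp: tri_E_iff)

(* From here on n = Suc m: each side has m edges, boundary indices run over 0..3m,
   and index 3m names the corner 0 again. *)

lemma bnd_pt_side1: "i \<le> m \<Longrightarrow> bnd_pt (Suc m) i = (int i, 0)"
  by (auto simp: bnd_pt_def Let_def)

lemma bnd_pt_side2:
  "m \<le> i \<Longrightarrow> i \<le> 2 * m \<Longrightarrow> bnd_pt (Suc m) i = (int (2 * m) - int i, int i - int m)"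
  by (auto simp: bnd_pt_def Let_def)

lemma bnd_pt_side3: "2 * m \<le> i \<Longrightarrow> bnd_pt (Suc m) i = (0, int (3 * m) - int i)"
  by (auto simp: bnd_pt_def Let_def)

lemma bnd_pt_cases:
  assumes "i \<le> 3 * m"
  obtains "i \<le> m" "bnd_pt (Suc m) i = (int i, 0)"
  | "m \<le> i" "i \<le> 2 * m" "bnd_pt (Suc m) i = (int (2 * m) - int i, int i - int m)"
  | "2 * m \<le> i" "i \<le> 3 * m" "bnd_pt (Suc m) i = (0, int (3 * m) - int i)"
  using assms bnd_pt_side1 bnd_pt_side2 bnd_pt_side3 by (metis nat_le_linear)

lemma bnd_pt_3m: "bnd_pt (Suc m) (3 * m) = bnd_pt (Suc m) 0"
  by (simp add: bnd_pt_side1 bnd_pt_side3)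

lemma bnd_pt_Suc_mod:
  assumes "i < 3 * m"
  shows "bnd_pt (Suc m) (Suc i mod (3 * m)) = bnd_pt (Suc m) (Suc i)"
proof (cases "Suc i < 3 * m")
  case False
  with assms have "Suc i = 3 * m"
    by simp
  then show ?thesis
    by (simp add: bnd_pt_3m)
qed simp

lemma bnd_pt_in_tri_V: "i \<le> 3 * m \<Longrightarrow> bnd_pt (Suc m) i \<in> tri_V (Suc m)"
  by (erule bnd_pt_cases) (auto simp: tri_V_def)

lemma tri_E_bnd_pt_Suc:
  "i < 3 * m \<Longrightarrow> tri_E (Suc m) (bnd_pt (Suc m) i) (bnd_pt (Suc m) (Suc i))"
  unfolding tri_E_iff
  by (cases "i < m"; cases "i < 2 * m")
    (auto simp: tri_V_def bnd_pt_side1 bnd_pt_side2 bnd_pt_side3)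

lemma bnd_pt_eq_iff:
  assumes "i \<le> 3 * m" "j \<le> 3 * m"
  shows "bnd_pt (Suc m) i = bnd_pt (Suc m) j \<longleftrightarrow> i = j \<or> {i, j} = {0, 3 * m}"
  by (rule bnd_pt_cases[OF assms(1)]; rule bnd_pt_cases[OF assms(2)]) (auto simp: doubleton_eq_iff)

lemma inj_on_bnd_pt:
  assumes "A \<subseteq> {..3 * m}" and "0 \<notin> A \<or> 3 * m \<notin> A"
  shows "inj_on (bnd_pt (Suc m)) A"
proof (rule inj_onI)
  fix i j assume "i \<in> A" "j \<in> A" "bnd_pt (Suc m) i = bnd_pt (Suc m) j"
  then show "i = j"
    using assms bnd_pt_eq_iff[of i m j] by (auto simp: doubleton_eq_iff)
qed

definition boundary_arc :: "nat \<Rightarrow> nat \<Rightarrow> nat \<Rightarrow> (int \<times> int) list" where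
  "boundary_arc n a b = map (bnd_pt n) [a..<Suc b]"

definition boundary_edge :: "nat \<Rightarrow> nat \<Rightarrow> (int \<times> int) set" where
  "boundary_edge n k = {bnd_pt n k, bnd_pt n (Suc k)}"

lemma set_boundary_arc: "set (boundary_arc n a b) = bnd_pt n ` {a..b}"
  by (auto simp: boundary_arc_def atLeastLessThanSuc_atLeastAtMost)

lemma length_boundary_arc: "length (boundary_arc n a b) = Suc b - a"
  by (simp add: boundary_arc_def del: upt_Suc)

lemma nth_boundary_arc: "k \<le> b - a \<Longrightarrow> a \<le> b \<Longrightarrow> boundary_arc n a b ! k = bnd_pt n (a + k)"
  by (simp add: boundary_arc_def nth_map_upt del: upt_Suc)

lemma hd_boundary_arc: "a \<le> b \<Longrightarrow> hd (boundary_arc n a b) = bnd_pt n a"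
  by (simp add: boundary_arc_def hd_map del: upt_Suc)

lemma last_boundary_arc: "a \<le> b \<Longrightarrow> last (boundary_arc n a b) = bnd_pt n b"
  by (simp add: boundary_arc_def)

lemma walk_boundary_arc:
  assumes "a \<le> b" "b \<le> 3 * m"
  shows "walk (tri_V (Suc m)) (tri_E (Suc m)) (boundary_arc (Suc m) a b)"
  unfolding walk_def
proof (intro conjI allI impI)
  show "boundary_arc (Suc m) a b \<noteq> []"
    using assms by (simp add: boundary_arc_def)
  show "set (boundary_arc (Suc m) a b) \<subseteq> tri_V (Suc m)"
    using assms bnd_pt_in_tri_V by (auto simp: set_boundary_arc)
  fix i assume "Suc i < length (boundary_arc (Suc m) a b)"
  then show "tri_E (Suc m) (boundary_arc (Suc m) a b ! i) (boundary_arc (Suc m) a b ! Suc i)"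
    using assms tri_E_bnd_pt_Suc[of "a + i" m] by (simp add: length_boundary_arc nth_boundary_arc)
qed

lemma is_path_boundary_arc:
  assumes "a \<le> b" "b \<le> 3 * m" "0 < a \<or> b < 3 * m"
  shows "is_path (tri_V (Suc m)) (tri_E (Suc m)) (boundary_arc (Suc m) a b)"
proof -
  have "inj_on (bnd_pt (Suc m)) {a..<Suc b}"
    by (rule inj_on_bnd_pt) (use assms in auto)
  then show ?thesis
    using walk_boundary_arc[OF assms(1,2)]
    by (simp add: is_path_def boundary_arc_def distinct_map del: upt_Suc)
qed

lemma path_edges_boundary_arc:
  assumes "a \<le> b"
  shows "path_edges (boundary_arc n a b) = boundary_edge n ` {a..<b}"
proof -
  have "path_edges (boundary_arc n a b) = {boundary_edge n (a + i) | i. i < b - a}"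
    unfolding path_edges_def boundary_edge_def using assms
    by (intro Collect_cong ex_cong1) (auto simp: length_boundary_arc nth_boundary_arc)
  also have "\<dots> = boundary_edge n ` (\<lambda>i. i + a) ` {0..<b - a}"
    unfolding image_image by (auto simp: add.commute)
  also have "\<dots> = boundary_edge n ` {a..<b}"
    using assms by simp
  finally show ?thesis .
qed

lemma inj_on_boundary_edge: "inj_on (boundary_edge (Suc m)) {..<3 * m}"
proof (rule inj_onI)
  fix i j assume ij: "i \<in> {..<3 * m}" "j \<in> {..<3 * m}"
    and "boundary_edge (Suc m) i = boundary_edge (Suc m) j"
  then consider
      "bnd_pt (Suc m) i = bnd_pt (Suc m) j"
    | "bnd_pt (Suc m) i = bnd_pt (Suc m) (Suc j)" "bnd_pt (Suc m) (Suc i) = bnd_pt (Suc m) j"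
    unfolding boundary_edge_def doubleton_eq_iff by blast
  then show "i = j"
  proof cases
    case 1
    then show ?thesis
      using ij bnd_pt_eq_iff[of i m j] by auto
  next
    case 2
    then have "i = Suc j \<or> {i, Suc j} = {0, 3 * m}" "Suc i = j \<or> {Suc i, j} = {0, 3 * m}"
      using ij bnd_pt_eq_iff[of i m "Suc j"] bnd_pt_eq_iff[of "Suc i" m j] by auto
    moreover have "3 * m \<noteq> 2"  \<comment> \<open>an edge matches a reversed edge only on a 2-cycle\<close>
      by presburger
    ultimately show ?thesis
      using ij by (auto simp: doubleton_eq_iff)
  qed
qed

lemma path_edges_boundary_arc_disjoint:
  assumes "a \<le> b" "b \<le> c" "c \<le> d" "d \<le> 3 * m"
  shows "path_edges (boundary_arc (Suc m) a b) \<inter> path_edges (boundary_arc (Suc m) c d) = {}"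
proof -
  have "boundary_edge (Suc m) ` ({a..<b} \<inter> {c..<d})
      = boundary_edge (Suc m) ` {a..<b} \<inter> boundary_edge (Suc m) ` {c..<d}"
    by (rule inj_on_image_Int[OF inj_on_boundary_edge]) (use assms in auto)
  then show ?thesis
    using assms by (simp add: path_edges_boundary_arc)
qed

lemma set_boundary_arc_Int:
  assumes "a \<le> b" "b \<le> c" "c \<le> 3 * m" "0 < a \<or> c < 3 * m"
  shows "set (boundary_arc (Suc m) a b) \<inter> set (boundary_arc (Suc m) b c) = {bnd_pt (Suc m) b}"
proof -
  have "bnd_pt (Suc m) ` ({a..b} \<inter> {b..c}) = bnd_pt (Suc m) ` {a..b} \<inter> bnd_pt (Suc m) ` {b..c}"
    by (rule inj_on_image_Int[OF inj_on_bnd_pt[of "{a..c}"]]) (use assms in auto)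
  moreover have "{a..b} \<inter> {b..c} = {b}"
    using assms by auto
  ultimately show ?thesis
    by (simp add: set_boundary_arc)
qed

lemma set_boundary_arc_Int_wrap:
  assumes "b < a" "a \<le> 3 * m"
  shows "set (boundary_arc (Suc m) a (3 * m)) \<inter> set (boundary_arc (Suc m) 0 b) = {bnd_pt (Suc m) 0}"
proof -
  have "{a..3 * m} = insert (3 * m) {a..<3 * m}"
    using assms by auto
  then have "set (boundary_arc (Suc m) a (3 * m)) = bnd_pt (Suc m) ` insert 0 {a..<3 * m}"
    by (simp add: set_boundary_arc bnd_pt_3m)
  moreover have "bnd_pt (Suc m) ` (insert 0 {a..<3 * m} \<inter> {0..b})
      = bnd_pt (Suc m) ` insert 0 {a..<3 * m} \<inter> bnd_pt (Suc m) ` {0..b}"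
    by (rule inj_on_image_Int[OF inj_on_bnd_pt[of "{..<3 * m}"]]) (use assms in auto)
  moreover have "insert 0 {a..<3 * m} \<inter> {0..b} = {0}"
    using assms by auto
  ultimately show ?thesis
    by (simp add: set_boundary_arc)
qed

lemma length_boundary_cycle: "length (boundary_cycle (Suc m)) = 3 * m"
  by (simp add: boundary_cycle_def)

lemma nth_boundary_cycle: "i < 3 * m \<Longrightarrow> boundary_cycle (Suc m) ! i = bnd_pt (Suc m) i"
  by (simp add: boundary_cycle_def)

lemma is_cycle_boundary_cycle:
  assumes "1 \<le> m"
  shows "is_cycle (tri_V (Suc m)) (tri_E (Suc m)) (boundary_cycle (Suc m))"
  unfolding is_cycle_def
proof (intro conjI allI impI)
  show "3 \<le> length (boundary_cycle (Suc m))"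
    using assms by (simp add: boundary_cycle_def)
  have "inj_on (bnd_pt (Suc m)) {0..<3 * m}"
    by (rule inj_on_bnd_pt) auto
  then show "distinct (boundary_cycle (Suc m))"
    by (simp add: boundary_cycle_def distinct_map)
  show "set (boundary_cycle (Suc m)) \<subseteq> tri_V (Suc m)"
    using bnd_pt_in_tri_V by (auto simp: boundary_cycle_def)
  fix i assume "i < length (boundary_cycle (Suc m))"
  then have "i < 3 * m"
    by (simp add: length_boundary_cycle)
  then show "tri_E (Suc m) (boundary_cycle (Suc m) ! i)
      (boundary_cycle (Suc m) ! ((i + 1) mod length (boundary_cycle (Suc m))))"
    by (simp add: length_boundary_cycle nth_boundary_cycle bnd_pt_Suc_mod tri_E_bnd_pt_Suc)
qed

lemma cycle_edges_boundary_cycle: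
  "cycle_edges (boundary_cycle (Suc m)) = boundary_edge (Suc m) ` {..<3 * m}"
proof -
  have "cycle_edges (boundary_cycle (Suc m)) = {boundary_edge (Suc m) i | i. i < 3 * m}"
    unfolding cycle_edges_def boundary_edge_def
    by (intro Collect_cong ex_cong1)
      (auto simp: length_boundary_cycle nth_boundary_cycle bnd_pt_Suc_mod)
  then show ?thesis
    by blast
qed

lemma path_edges_boundary_sides:
  "path_edges (boundary_arc (Suc m) 0 m) \<union> path_edges (boundary_arc (Suc m) m (2 * m))
     \<union> path_edges (boundary_arc (Suc m) (2 * m) (3 * m))
   = cycle_edges (boundary_cycle (Suc m))"
proof -
  have "{0..<m} \<union> {m..<2 * m} \<union> {2 * m..<3 * m} = {..<3 * m}"
    by auto
  then show ?thesis
    by (simp add: path_edges_boundary_arc cycle_edges_boundary_cycle flip: image_Un)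
qed

lemma boundary_sides_far_apart:
  assumes "u1 \<in> set (boundary_arc (Suc m) 0 m)" "u2 \<in> set (boundary_arc (Suc m) m (2 * m))"
    and "u3 \<in> set (boundary_arc (Suc m) (2 * m) (3 * m))"
  defines "d \<equiv> gdist (tri_V (Suc m)) (tri_E (Suc m))"
  shows "m div 2 \<le> max (max (d u1 u2) (d u2 u3)) (d u3 u1)"
proof -
  obtain i j k where ijk: "i \<in> {0..m}" "j \<in> {m..2 * m}" "k \<in> {2 * m..3 * m}"
    and u: "u1 = bnd_pt (Suc m) i" "u2 = bnd_pt (Suc m) j" "u3 = bnd_pt (Suc m) k"
    using assms(1-3) unfolding set_boundary_arc by blast
  have "\<bar>(fst u1 + snd u1) - (fst u2 + snd u2)\<bar> \<le> int (d u1 u2)"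
    unfolding d_def
  proof (rule lipschitz_le_gdist[where f = "\<lambda>u. fst u + snd u"])
    show "walk (tri_V (Suc m)) (tri_E (Suc m)) (boundary_arc (Suc m) i j)"
      using ijk by (intro walk_boundary_arc) auto
  qed (use ijk u tri_E_coord_sum_lipschitz in \<open>auto simp: hd_boundary_arc last_boundary_arc\<close>)
  then have "int m - int i \<le> int (d u1 u2)"
    using ijk u by (simp add: bnd_pt_side1 bnd_pt_side2)
  moreover have "\<bar>fst u3 - fst u1\<bar> \<le> int (d u3 u1)"
    unfolding d_def
  proof (rule lipschitz_le_gdist[where f = fst])
    show "walk (tri_V (Suc m)) (tri_E (Suc m)) (rev (boundary_arc (Suc m) i k))"
      using ijk by (auto intro: walk_rev[OF walk_boundary_arc] tri_E_sym)
  qed (use ijk u tri_E_fst_lipschitz in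
        \<open>auto simp: hd_rev last_rev hd_boundary_arc last_boundary_arc\<close>)
  then have "int i \<le> int (d u3 u1)"
    using ijk u by (simp add: bnd_pt_side1 bnd_pt_side3)
  ultimately show ?thesis
    by linarith
qed

theorem mainTheorem6:
  fixes n :: nat
  assumes "2 \<le> n"
  shows "k_supported (tri_V n) (tri_E n) (boundary_cycle n) ((n - 1) div 2)"
proof -
  obtain m where n: "n = Suc m" and m: "1 \<le> m"
    using assms by (cases n) auto
  show ?thesis
    unfolding k_supported_def n diff_Suc_1
  proof (intro conjI exI ballI)
    let ?I1 = "boundary_arc (Suc m) 0 m"
      and ?I2 = "boundary_arc (Suc m) m (2 * m)"
      and ?I3 = "boundary_arc (Suc m) (2 * m) (3 * m)"
    show "is_cycle (tri_V (Suc m)) (tri_E (Suc m)) (boundary_cycle (Suc m))"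
      using m by (rule is_cycle_boundary_cycle)
    show "is_path (tri_V (Suc m)) (tri_E (Suc m)) ?I1" "is_path (tri_V (Suc m)) (tri_E (Suc m)) ?I2"
      "is_path (tri_V (Suc m)) (tri_E (Suc m)) ?I3"
      using m by (simp_all add: is_path_boundary_arc)
    show "2 \<le> length ?I1" "2 \<le> length ?I2" "2 \<le> length ?I3"
      using m by (simp_all add: length_boundary_arc)
    show "path_edges ?I1 \<union> path_edges ?I2 \<union> path_edges ?I3 = cycle_edges (boundary_cycle (Suc m))"
      by (rule path_edges_boundary_sides)
    show "path_edges ?I1 \<inter> path_edges ?I2 = {}" "path_edges ?I2 \<inter> path_edges ?I3 = {}"
      "path_edges ?I3 \<inter> path_edges ?I1 = {}"
      using path_edges_boundary_arc_disjoint[of 0 m "2 * m" "3 * m" m]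
      by (simp_all add: path_edges_boundary_arc_disjoint Int_commute)
    show "set ?I1 \<inter> set ?I2 = {bnd_pt (Suc m) m}" "set ?I2 \<inter> set ?I3 = {bnd_pt (Suc m) (2 * m)}"
      using m by (simp_all add: set_boundary_arc_Int)
    show "set ?I3 \<inter> set ?I1 = {bnd_pt (Suc m) 0}"
      using m by (simp add: set_boundary_arc_Int_wrap)
    fix u1 u2 u3 assume "u1 \<in> set ?I1" "u2 \<in> set ?I2" "u3 \<in> set ?I3"
    then show "m div 2 \<le> max (max (gdist (tri_V (Suc m)) (tri_E (Suc m)) u1 u2)
        (gdist (tri_V (Suc m)) (tri_E (Suc m)) u2 u3)) (gdist (tri_V (Suc m)) (tri_E (Suc m)) u3 u1)"
      by (rule boundary_sides_far_apart)
  qed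
qed

end
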